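(* Let $T$ be a c.n.u. contraction on $H$ and let $(H_+,H_-,\Gamma_+,\Gamma_-)$ be a boundary quadruple for $A_T^{\perp_s}$ with contractive Weyl function $B$. For $s,t\in\mathfrak{H}$, one has $(s,t)\in\widehat{A_T^{\perp_s}}$ if and only if there exist $x_\pm\in H_\pm$ such that $\lambda f_s(\lambda)-f_t(\lambda)=B(\lambda)x_+-x_-$ for all $\lambda\in\mathbb{D}_+$ and $f_s(\lambda)-\lambda f_t(\lambda)=x_+-B(\bar\lambda)^*x_-$ for all $\lambda\in\mathbb{D}_-$.
   Context: $H$ is an infinite-dimensional separable complex Hilbert space with inner product $(\cdot,\cdot)_H$; $T\in\mathbb{B}(H)$, $\|T\|\le1$, is completely non-unitary. $\mathbb{K}=\ker(I-T^*T)$. $\mathbb{H}=H\oplus_\perp H$ with $[(x_1,x_2),(y_1,y_2)]=i(x_1,y_1)_H-i(x_2,y_2)_H$; $S^{\perp_s}=\{a:[a,b]=0\ \forall b\in S\}$; $A_T=\{(x,Tx):x\in\mathbb{K}\}$. $\mathbb{D}_\pm$ are two copies of the open unit disc; for $\lambda\in\mathbb{D}_\pm$, $\bar\lambda$ is regarded as a point of $\mathbb{D}_\mp$. $N_\lambda=\{(x,\lambda x)\}\cap A_T^{\perp_s}$ ($\lambda\in\mathbb{D}_+$), $N_\lambda=\{(\lambda x,x)\}\cap A_T^{\perp_s}$ ($\lambda\in\mathbb{D}_-$). Boundary quadruple: Hilbert spaces $H_\pm$, linear $\Gamma_\pm:A_T^{\perp_s}\to H_\pm$ with $(\Gamma_+,\Gamma_-)$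 bounded, onto $H_+\oplus_\perp H_-$, kernel $A_T$, and $[a,b]=i(\Gamma_+a,\Gamma_+b)-i(\Gamma_-a,\Gamma_-b)$. Contractive Weyl function $B$: for $\lambda\in\mathbb{D}_+$, $\Gamma_+|_{N_\lambda}$ bijective onto $H_+$, $\Gamma_-a=B(\lambda)\Gamma_+a$ on $N_\lambda$, $\|B(\lambda)\|<1$; for $\lambda\in\mathbb{D}_-$, $\Gamma_-|_{N_\lambda}$ bijective onto $H_-$ and $\Gamma_+a=B(\bar\lambda)^*\Gamma_-a$ on $N_\lambda$. $\gamma_\pm,\varphi_\pm$: $\gamma_+(\lambda)x\in N_\lambda$, $\Gamma_+\gamma_+(\lambda)x=x$ ($\lambda\in\mathbb{D}_+$); $\gamma_-(\lambda)x\in N_\lambda$, $\Gamma_-\gamma_-(\lambda)x=x$ ($\lambda\in\mathbb{D}_-$); $\varphi_+=pr_1\circ\gamma_+$, $\varphi_-=pr_2\circ\gamma_-$. $E_\lambda=pr_1(N_\lambda)$ or $pr_2(N_\lambda)$ according as $\lambda\in\mathbb{D}_+$ or $\mathbb{D}_-$; $F^\dagger_\lambda=E_{\bar\lambda}$, $F_\lambda$ its conjugate-linear dual, pairing $((\cdot,\cdot))$. For $x\in H$, $\hat x(\lambda)\in F_\lambda$ is $\omega\mapsto(x,\omega)_H$; $x\mapsto\hat x$ is injective, and $\mathfrak{H}=\{\hat x:x\in H\}$ with $(\hat x,\hat y)_{\mathfrak{H}}=(x,y)_H$. For $S\subseteq\mathbb{H}$, $\hat S=\{(\hat x,\hat y):(x,y)\in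 S\}$. Trivialization: for $\lambda\in\mathbb{D}_+$, $(\varphi_-^\dagger(\lambda)\omega,z)_{H_-}=((\omega,\varphi_-(\bar\lambda)z))$; for $\lambda\in\mathbb{D}_-$, $(\varphi_+^\dagger(\lambda)\omega,z)_{H_+}=((\omega,\varphi_+(\bar\lambda)z))$; $f_s(\lambda)=\varphi_-^\dagger(\lambda)s(\lambda)$ on $\mathbb{D}_+$ and $\varphi_+^\dagger(\lambda)s(\lambda)$ on $\mathbb{D}_-$. *)

theory Defs
  imports "HOL-Analysis.Analysis"
begin

class complex_vector = real_vector +
  fixes scaleC :: "complex \<Rightarrow> 'a \<Rightarrow> 'a" (infixr "*\<^sub>C" 75)
  assumes scaleC_add_right: "scaleC a (x + y) = scaleC a x + scaleC a y"
    and scaleC_add_left: "scaleC (a + b) x = scaleC a x + scaleC b x"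
    and scaleC_scaleC: "scaleC a (scaleC b x) = scaleC (a * b) x"
    and scaleC_one: "scaleC 1 x = x"
    and scaleR_scaleC: "scaleR r x = scaleC (complex_of_real r) x"

text \<open>Inner product linear in the first, conjugate-linear in the second argument
  (the convention of the paper: \<open>(x,\<omega>)\<close> is conjugate-linear in \<open>\<omega>\<close>).
  Together with class banach (whose norm is the same class parameter) this is a
  complex Hilbert space.\<close>
class complex_inner = complex_vector + real_normed_vector +
  fixes cinner :: "'a \<Rightarrow> 'a \<Rightarrow> complex"
  assumes cinner_commute: "cinner x y = cnj (cinner y x)"
    and cinner_add_left: "cinner (x + y) z = cinner x z + cinner y z"
    and cinner_scaleC_left: "cinner (scaleC r x) y = r * cinner x y"
    and cinner_self_real: "Im (cinner x x) = 0"
    and cinner_self_nonneg: "0 \<le> Re (cinner x x)"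
    and cinner_self_zero: "cinner x x = 0 \<longleftrightarrow> x = 0"
    and norm_eq_sqrt_cinner: "norm x = sqrt (Re (cinner x x))"

definition separable_H :: "'a::topological_space itself \<Rightarrow> bool" where
  "separable_H _ \<longleftrightarrow> (\<exists>D::'a set. countable D \<and> closure D = UNIV)"

definition infinite_dimensional :: "'a::complex_vector itself \<Rightarrow> bool" where
  "infinite_dimensional _ \<longleftrightarrow>
     \<not> (\<exists>S::'a set. finite S \<and> (\<forall>x. \<exists>c. x = (\<Sum>s\<in>S. c s *\<^sub>C s)))"

definition clinear :: "('a::complex_vector \<Rightarrow> 'b::complex_vector) \<Rightarrow> bool" where
  "clinear L \<longleftrightarrow> (\<forall>x y. L (x + y) = L x + L y) \<and> (\<forall>c x. L (c *\<^sub>C x) = c *\<^sub>C L x)"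

definition bounded_clinear :: "('a::{complex_vector,real_normed_vector} \<Rightarrow> 'b::{complex_vector,real_normed_vector}) \<Rightarrow> bool" where
  "bounded_clinear L \<longleftrightarrow> clinear L \<and> (\<exists>K. \<forall>x. norm (L x) \<le> K * norm x)"

definition cadjoint :: "('a::complex_inner \<Rightarrow> 'b::complex_inner) \<Rightarrow> 'b \<Rightarrow> 'a" where
  "cadjoint L y = (THE w. \<forall>x. cinner (L x) y = cinner x w)"

definition closed_csubspace :: "'a::{complex_vector,topological_space} set \<Rightarrow> bool" where
  "closed_csubspace M \<longleftrightarrow> 0 \<in> M \<and> (\<forall>x\<in>M. \<forall>y\<in>M. x + y \<in> M)
     \<and> (\<forall>c. \<forall>x\<in>M. c *\<^sub>C x \<in> M) \<and> closed M"

definition completely_non_unitary :: "('a::complex_inner \<Rightarrow> 'a) \<Rightarrow> bool" where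
  "completely_non_unitary T \<longleftrightarrow>
     \<not> (\<exists>M::'a::complex_inner set. closed_csubspace M \<and> M \<noteq> {0}
          \<and> T ` M \<subseteq> M \<and> cadjoint T ` M \<subseteq> M
          \<and> (\<forall>x\<in>M. cadjoint T (T x) = x \<and> T (cadjoint T x) = x))"

text \<open>The norm on pairs (library instance for products) is the Hilbert direct sum norm.\<close>
definition kform :: "'a::complex_inner \<times> 'a \<Rightarrow> 'a \<times> 'a \<Rightarrow> complex" where
  "kform a b = \<i> * cinner (fst a) (fst b) - \<i> * cinner (snd a) (snd b)"

definition s_orth :: "('a::complex_inner \<times> 'a) set \<Rightarrow> ('a \<times> 'a) set" where
  "s_orth S = {a. \<forall>b\<in>S. kform a b = 0}"

definition KK :: "('a::complex_inner \<Rightarrow> 'a) \<Rightarrow> 'a set" where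
  "KK T = {x. x - cadjoint T (T x) = 0}"

definition A_T :: "('a::complex_inner \<Rightarrow> 'a) \<Rightarrow> ('a \<times> 'a) set" where
  "A_T T = {(x, T x) | x. x \<in> KK T}"

text \<open>Points of \<open>\<DD>\<^sub>+\<close> are \<open>(True, \<lambda>)\<close>, points of \<open>\<DD>\<^sub>-\<close> are \<open>(False, \<lambda>)\<close>, \<open>|\<lambda>| < 1\<close>.\<close>

definition boundary_quadruple ::
  "('a::complex_inner \<Rightarrow> 'a) \<Rightarrow> ('a \<times> 'a \<Rightarrow> 'p::{complex_inner,banach})
     \<Rightarrow> ('a \<times> 'a \<Rightarrow> 'm::{complex_inner,banach}) \<Rightarrow> bool" where
  "boundary_quadruple T Gp Gm \<longleftrightarrow>
     (let D = s_orth (A_T T) in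
       (\<forall>a\<in>D. \<forall>b\<in>D. Gp (a + b) = Gp a + Gp b \<and> Gm (a + b) = Gm a + Gm b)
     \<and> (\<forall>c. \<forall>a\<in>D. Gp (c *\<^sub>C fst a, c *\<^sub>C snd a) = c *\<^sub>C Gp a
                 \<and> Gm (c *\<^sub>C fst a, c *\<^sub>C snd a) = c *\<^sub>C Gm a)
     \<and> (\<exists>K. \<forall>a\<in>D. norm (Gp a, Gm a) \<le> K * norm a)
     \<and> (\<forall>yp ym. \<exists>a\<in>D. Gp a = yp \<and> Gm a = ym)
     \<and> {a\<in>D. Gp a = 0 \<and> Gm a = 0} = A_T T
     \<and> (\<forall>a\<in>D. \<forall>b\<in>D. kform a b = \<i> * cinner (Gp a) (Gp b) - \<i> * cinner (Gm a) (Gm b)))"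

definition Nl :: "('a::complex_inner \<Rightarrow> 'a) \<Rightarrow> bool \<Rightarrow> complex \<Rightarrow> ('a \<times> 'a) set" where
  "Nl T pl l = (if pl then {(x, l *\<^sub>C x) | x. True} else {(l *\<^sub>C x, x) | x. True})
               \<inter> s_orth (A_T T)"

definition contractive_weyl_function ::
  "('a::complex_inner \<Rightarrow> 'a) \<Rightarrow> ('a \<times> 'a \<Rightarrow> 'p::{complex_inner,banach})
     \<Rightarrow> ('a \<times> 'a \<Rightarrow> 'm::{complex_inner,banach}) \<Rightarrow> (complex \<Rightarrow> 'p \<Rightarrow> 'm) \<Rightarrow> bool" where
  "contractive_weyl_function T Gp Gm B \<longleftrightarrow>
     (\<forall>l. norm l < 1 \<longrightarrow>
        bij_betw Gp (Nl T True l) UNIV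
      \<and> (\<forall>a\<in>Nl T True l. Gm a = B l (Gp a))
      \<and> (\<exists>c<1. \<forall>x. norm (B l x) \<le> c * norm x))
   \<and> (\<forall>l. norm l < 1 \<longrightarrow>
        bij_betw Gm (Nl T False l) UNIV
      \<and> (\<forall>a\<in>Nl T False l. Gp a = cadjoint (B (cnj l)) (Gm a)))"

definition gamma_p :: "('a::complex_inner \<Rightarrow> 'a) \<Rightarrow> ('a \<times> 'a \<Rightarrow> 'p) \<Rightarrow> complex \<Rightarrow> 'p \<Rightarrow> 'a \<times> 'a" where
  "gamma_p T Gp l x = (THE a. a \<in> Nl T True l \<and> Gp a = x)"

definition gamma_m :: "('a::complex_inner \<Rightarrow> 'a) \<Rightarrow> ('a \<times> 'a \<Rightarrow> 'm) \<Rightarrow> complex \<Rightarrow> 'm \<Rightarrow> 'a \<times> 'a" where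
  "gamma_m T Gm l x = (THE a. a \<in> Nl T False l \<and> Gm a = x)"

definition phi_p :: "('a::complex_inner \<Rightarrow> 'a) \<Rightarrow> ('a \<times> 'a \<Rightarrow> 'p) \<Rightarrow> complex \<Rightarrow> 'p \<Rightarrow> 'a" where
  "phi_p T Gp l x = fst (gamma_p T Gp l x)"

definition phi_m :: "('a::complex_inner \<Rightarrow> 'a) \<Rightarrow> ('a \<times> 'a \<Rightarrow> 'm) \<Rightarrow> complex \<Rightarrow> 'm \<Rightarrow> 'a" where
  "phi_m T Gm l x = snd (gamma_m T Gm l x)"

definition El :: "('a::complex_inner \<Rightarrow> 'a) \<Rightarrow> bool \<Rightarrow> complex \<Rightarrow> 'a set" where
  "El T pl l = (if pl then fst ` Nl T True l else snd ` Nl T False l)"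

text \<open>Sections \<open>s\<close> assign to each \<open>\<lambda>\<close> a conjugate-linear functional on
  \<open>F\<^sup>\<dagger>\<^sub>\<lambda> = E\<^sub>\<lambda>\<^sub>\<^bold>-\<close> (with \<open>\<lambda>\<^bold>-\<close> the conjugate point in the other disc);
  functionals are represented as functions on H vanishing off \<open>F\<^sup>\<dagger>\<^sub>\<lambda>\<close>
  (and sections vanish for \<open>|\<lambda>| \<ge> 1\<close>), so equality of sections is equality of functions.\<close>
definition hat :: "('a::complex_inner \<Rightarrow> 'a) \<Rightarrow> 'a \<Rightarrow> bool \<Rightarrow> complex \<Rightarrow> 'a \<Rightarrow> complex" where
  "hat T x pl l \<omega> = (if norm l < 1 \<and> \<omega> \<in> El T (\<not> pl) (cnj l) then cinner x \<omega> else 0)"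

definition frakH :: "('a::complex_inner \<Rightarrow> 'a) \<Rightarrow> (bool \<Rightarrow> complex \<Rightarrow> 'a \<Rightarrow> complex) set" where
  "frakH T = {hat T x | x. True}"

definition hat_rel :: "('a::complex_inner \<Rightarrow> 'a) \<Rightarrow> ('a \<times> 'a) set
     \<Rightarrow> ((bool \<Rightarrow> complex \<Rightarrow> 'a \<Rightarrow> complex) \<times> (bool \<Rightarrow> complex \<Rightarrow> 'a \<Rightarrow> complex)) set" where
  "hat_rel T S = {(hat T x, hat T y) | x y. (x, y) \<in> S}"

text \<open>Trivialization: \<open>f\<^sub>s(\<lambda>) = \<phi>\<^sub>-\<^sup>\<dagger>(\<lambda>) s(\<lambda>) \<in> H\<^sub>-\<close> for \<open>\<lambda> \<in> \<DD>\<^sub>+\<close>, and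
  \<open>f\<^sub>s(\<lambda>) = \<phi>\<^sub>+\<^sup>\<dagger>(\<lambda>) s(\<lambda>) \<in> H\<^sub>+\<close> for \<open>\<lambda> \<in> \<DD>\<^sub>-\<close>.\<close>
definition f_plus :: "('a::complex_inner \<Rightarrow> 'a) \<Rightarrow> ('a \<times> 'a \<Rightarrow> 'm::complex_inner)
     \<Rightarrow> (bool \<Rightarrow> complex \<Rightarrow> 'a \<Rightarrow> complex) \<Rightarrow> complex \<Rightarrow> 'm" where
  "f_plus T Gm s l = (THE w. \<forall>z. cinner w z = s True l (phi_m T Gm (cnj l) z))"

definition f_minus :: "('a::complex_inner \<Rightarrow> 'a) \<Rightarrow> ('a \<times> 'a \<Rightarrow> 'p::complex_inner)
     \<Rightarrow> (bool \<Rightarrow> complex \<Rightarrow> 'a \<Rightarrow> complex) \<Rightarrow> complex \<Rightarrow> 'p" where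
  "f_minus T Gp s l = (THE w. \<forall>z. cinner w z = s False l (phi_p T Gp (cnj l) z))"

end

(* For (x, y) in the s-orthogonal complement D of A_T take x_+- = Gamma_+-(x, y).  The
   trivialised section of hat x at lambda is the adjoint of phi_-+(conj lambda) applied to x, so
   pairing either identity with a vector z amounts to pairing (x, y) in the Krein form with the
   defect vector gamma_-+(conj lambda) z, and Green's identity for the boundary quadruple
   evaluates this pairing through B.

   Conversely, pick a in D with Gamma_+- a = x_+- and put (p, q) = (x, y) - a.  The identities
   say that c p - q is orthogonal to the range of phi_-(conj c) and p - c q to that of
   phi_+(conj c).  Every vector orthogonal to (T - c) K lies in the first range and every vector
   orthogonal to (I - c T) K in the second, and both subspaces are closed since |c| < 1 and T is
   isometric on K; hence c p - q lies in (T - c) K and p - c q in (I - c T) K.  At c = 0 this gives p in K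
   and q = T j with j in K, and for 0 < |c| < 1 it puts p - j into a closed subspace that reduces
   T and on which T is unitary.  As T is completely non-unitary, p = j, so (p, q) = (p, T p) lies
   in A_T, which is contained in D. *)

theory Submission
  imports Defs
begin

section \<open>Complex inner product spaces\<close>

lemma scaleC_zero_left [simp]: "(0::complex) *\<^sub>C (x::'a::complex_vector) = 0"
  using scaleR_scaleC[of 0 x] by simp

lemma scaleC_zero_right [simp]: "c *\<^sub>C (0::'a::complex_vector) = 0"
  using scaleC_add_right[of c 0 0] by simp

lemma scaleC_minus_right: "c *\<^sub>C (- x::'a::complex_vector) = - (c *\<^sub>C x)"
  using scaleC_add_right[of c x "- x"] by (simp add: eq_neg_iff_add_eq_0 add.commute)

lemma scaleC_diff_right: "c *\<^sub>C (x - y::'a::complex_vector) = c *\<^sub>C x - c *\<^sub>C y"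
  using scaleC_add_right[of c x "- y"] by (simp add: scaleC_minus_right)

lemma scaleC_minus1_left: "(-1) *\<^sub>C (x::'a::complex_vector) = - x"
  using scaleC_add_left[of 1 "-1" x] by (simp add: scaleC_one eq_neg_iff_add_eq_0 add.commute)

lemma scaleC_cancel_left: "c \<noteq> 0 \<Longrightarrow> c *\<^sub>C x = c *\<^sub>C y \<longleftrightarrow> x = (y::'a::complex_vector)"
  by (metis scaleC_scaleC scaleC_one nonzero_divide_eq_eq divide_self_if)

lemma cinner_zero_left [simp]: "cinner 0 (y::'a::complex_inner) = 0"
  using cinner_add_left[of 0 0 y] by simp

lemma cinner_zero_right [simp]: "cinner (x::'a::complex_inner) 0 = 0"
  using cinner_commute[of x 0] by simp

lemma cinner_add_right: "cinner (x::'a::complex_inner) (y + z) = cinner x y + cinner x z"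
  using cinner_add_left[of y z x] by (metis cinner_commute complex_cnj_add)

lemma cinner_scaleC_right: "cinner (x::'a::complex_inner) (c *\<^sub>C y) = cnj c * cinner x y"
  using cinner_scaleC_left[of c y x] by (metis cinner_commute complex_cnj_mult)

lemma cinner_minus_left: "cinner (- x::'a::complex_inner) y = - cinner x y"
  using cinner_add_left[of x "- x" y] by (simp add: eq_neg_iff_add_eq_0 add.commute)

lemma cinner_minus_right: "cinner (x::'a::complex_inner) (- y) = - cinner x y"
  using cinner_add_right[of x y "- y"] by (simp add: eq_neg_iff_add_eq_0 add.commute)

lemma cinner_diff_left: "cinner (x - y::'a::complex_inner) z = cinner x z - cinner y z"
  using cinner_add_left[of x "- y" z] by (simp add: cinner_minus_left)

lemma cinner_diff_right: "cinner (x::'a::complex_inner) (y - z) = cinner x y - cinner x z"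
  using cinner_add_right[of x y "- z"] by (simp add: cinner_minus_right)

lemmas cinner_simps = cinner_add_left cinner_add_right cinner_diff_left cinner_diff_right
  cinner_minus_left cinner_minus_right cinner_scaleC_left cinner_scaleC_right

declare cinner_self_zero [simp]

lemma cinner_self: "cinner (x::'a::complex_inner) x = complex_of_real ((norm x)\<^sup>2)"
  using norm_eq_sqrt_cinner[of x] cinner_self_nonneg[of x] cinner_self_real[of x]
  by (simp add: complex_eq_iff)

lemma norm_square_eq_Re_cinner: "(norm x)\<^sup>2 = Re (cinner (x::'a::complex_inner) x)"
  by (simp add: cinner_self)

lemma norm_scaleC: "norm (c *\<^sub>C (x::'a::complex_inner)) = cmod c * norm x"
proof -
  have "complex_of_real ((norm (c *\<^sub>C x))\<^sup>2) = (c * cnj c) * cinner x x"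
    by (simp only: cinner_self[symmetric]) (simp add: cinner_simps mult.assoc)
  also have "\<dots> = complex_of_real ((cmod c * norm x)\<^sup>2)"
    by (simp add: cinner_self power_mult_distrib flip: complex_norm_square)
  finally show ?thesis
    by (simp only: of_real_eq_iff power2_eq_iff_nonneg norm_ge_zero zero_le_mult_iff) simp
qed

lemma cinner_ext_left:
  assumes "\<And>z. cinner w1 z = cinner w2 z" shows "w1 = (w2::'a::complex_inner)"
proof -
  have "cinner (w1 - w2) (w1 - w2) = 0"
    using assms[of "w1 - w2"] by (simp add: cinner_diff_left)
  then show ?thesis by simp
qed

lemma cinner_ext_right:
  assumes "\<And>z. cinner z w1 = cinner z w2" shows "w1 = (w2::'a::complex_inner)"
proof -
  have "cinner (w1 - w2) (w1 - w2) = 0"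
    using assms[of "w1 - w2"] by (simp add: cinner_diff_right)
  then show ?thesis by simp
qed

lemma norm_diff_projection_square:
  fixes w u :: "'a::complex_inner"
  assumes "u \<noteq> 0"
  shows "(norm (w - (cinner w u / complex_of_real ((norm u)\<^sup>2)) *\<^sub>C u))\<^sup>2
        = (norm w)\<^sup>2 - (cmod (cinner w u))\<^sup>2 / (norm u)\<^sup>2"
proof -
  define a n where "a = cinner w u" and "n = (norm u)\<^sup>2"
  have n: "n > 0" using assms by (simp add: n_def)
  have "cinner (w - (a / n) *\<^sub>C u) (w - (a / n) *\<^sub>C u) = cinner w w - a * cnj a / n"
    using n by (simp add: cinner_simps cinner_self[of u, folded n_def] a_def
        cinner_commute[of u w] field_simps)
  also have "\<dots> = complex_of_real ((norm w)\<^sup>2 - (cmod a)\<^sup>2 / n)"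
    by (simp add: cinner_self flip: complex_norm_square)
  finally show ?thesis
    unfolding cinner_self of_real_eq_iff a_def n_def .
qed

lemma cinner_Cauchy_Schwarz: "cmod (cinner x y) \<le> norm (x::'a::complex_inner) * norm y"
proof (cases "y = 0")
  case False
  have "0 \<le> (norm x)\<^sup>2 - (cmod (cinner x y))\<^sup>2 / (norm y)\<^sup>2"
    by (simp only: flip: norm_diff_projection_square[OF False]) simp
  then have "(cmod (cinner x y))\<^sup>2 \<le> (norm x * norm y)\<^sup>2"
    using False by (simp add: divide_le_eq power_mult_distrib)
  then show ?thesis
    by (rule power2_le_imp_le) simp
qed simp

lemma cinner_parallelogram:
  fixes a b :: "'a::complex_inner"
  shows "(norm (a + b))\<^sup>2 + (norm (a - b))\<^sup>2 = 2 * (norm a)\<^sup>2 + 2 * (norm b)\<^sup>2"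
proof -
  have "cinner (a + b) (a + b) + cinner (a - b) (a - b) = 2 * cinner a a + 2 * cinner b b"
    by (simp add: cinner_simps algebra_simps)
  from arg_cong[where f = Re, OF this] show ?thesis
    by (simp add: norm_square_eq_Re_cinner)
qed

section \<open>Closed subspaces and orthogonal projection\<close>

lemma closed_csubspace_diff:
  assumes "closed_csubspace V" "x \<in> V" "y \<in> V" shows "x - y \<in> V"
  using assms scaleC_minus1_left[of y] unfolding closed_csubspace_def by (metis diff_conv_add_uminus)

lemma closed_csubspace_scaleC_iff:
  assumes "closed_csubspace V" "c \<noteq> 0"
  shows "c *\<^sub>C x \<in> V \<longleftrightarrow> x \<in> V"
proof
  assume "c *\<^sub>C x \<in> V"
  then have "(1/c) *\<^sub>C (c *\<^sub>C x) \<in> V"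
    using assms(1) by (simp add: closed_csubspace_def)
  then show "x \<in> V"
    using assms(2) by (simp add: scaleC_scaleC scaleC_one)
qed (use assms(1) in \<open>simp add: closed_csubspace_def\<close>)

lemma closed_csubspace_imp_subspace: "closed_csubspace V \<Longrightarrow> subspace V"
  by (simp add: closed_csubspace_def subspace_def scaleR_scaleC)

lemma closed_csubspace_nearest_points_close:
  fixes x :: "'a::complex_inner"
  assumes V: "closed_csubspace V" and d: "\<forall>w\<in>V. d \<le> norm (x - w)" "0 \<le> d"
    and "v \<in> V" "w \<in> V"
  shows "(norm (v - w))\<^sup>2 \<le> 2 * (norm (x - v))\<^sup>2 + 2 * (norm (x - w))\<^sup>2 - 4 * d\<^sup>2"
proof -
  have "(1/2) *\<^sub>R (v + w) \<in> V"
    using V assms(4,5) closed_csubspace_imp_subspace subspace_add subspace_scale by blast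
  then have "2 * d \<le> norm (2 *\<^sub>R (x - (1/2) *\<^sub>R (v + w)))"
    using d by simp
  also have "2 *\<^sub>R (x - (1/2) *\<^sub>R (v + w)) = (x - v) + (x - w)"
    by (simp add: algebra_simps scaleR_2)
  finally have "(2 * d)\<^sup>2 \<le> (norm ((x - v) + (x - w)))\<^sup>2"
    using d(2) by (intro power_mono) auto
  moreover have "(x - v) - (x - w) = w - v" by simp
  ultimately show ?thesis
    using cinner_parallelogram[of "x - v" "x - w"] by (simp add: norm_minus_commute)
qed

lemma closed_csubspace_minimizing_Cauchy:
  fixes x :: "'a::complex_inner"
  assumes V: "closed_csubspace V" and d: "\<forall>w\<in>V. d \<le> norm (x - w)" "0 \<le> d"
    and vs: "\<And>n. vs n \<in> V" and lim: "(\<lambda>n. norm (x - vs n)) \<longlonglongrightarrow> d"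
  shows "Cauchy vs"
proof (rule metric_CauchyI)
  fix e :: real assume "e > 0"
  have "(\<lambda>n. 2 * (norm (x - vs n))\<^sup>2 - 2 * d\<^sup>2) \<longlonglongrightarrow> 2 * d\<^sup>2 - 2 * d\<^sup>2"
    using lim by (intro tendsto_diff tendsto_mult tendsto_power tendsto_const)
  then have excess: "(\<lambda>n. 2 * (norm (x - vs n))\<^sup>2 - 2 * d\<^sup>2) \<longlonglongrightarrow> 0"
    by simp
  obtain N where N: "\<And>n. n \<ge> N \<Longrightarrow> \<bar>2 * (norm (x - vs n))\<^sup>2 - 2 * d\<^sup>2\<bar> < e\<^sup>2 / 2"
    using LIMSEQ_D[OF excess, of "e\<^sup>2 / 2"] \<open>e > 0\<close> by auto
  have "dist (vs m) (vs n) < e" if "m \<ge> N" "n \<ge> N" for m n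
  proof -
    have "(norm (vs m - vs n))\<^sup>2 < e\<^sup>2"
      using closed_csubspace_nearest_points_close[OF V d vs vs, of m n]
        N[OF that(1)] N[OF that(2)] by linarith
    then show ?thesis
      using \<open>e > 0\<close> by (simp add: dist_norm power_less_imp_less_base)
  qed
  then show "\<exists>N. \<forall>m\<ge>N. \<forall>n\<ge>N. dist (vs m) (vs n) < e" by blast
qed

lemma closed_csubspace_nearest_point:
  fixes x :: "'a::{complex_inner,banach}"
  assumes V: "closed_csubspace V"
  shows "\<exists>v\<in>V. \<forall>w\<in>V. norm (x - v) \<le> norm (x - w)"
proof -
  define d where "d = Inf ((\<lambda>w. norm (x - w)) ` V)"
  have "0 \<in> V" using V by (simp add: closed_csubspace_def)
  then have d_le: "\<forall>w\<in>V. d \<le> norm (x - w)" and d_nonneg: "0 \<le> d"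
    unfolding d_def by (auto intro!: cInf_lower cInf_greatest bdd_belowI[of _ 0])
  have "\<exists>v\<in>V. norm (x - v) < d + 1 / Suc n" for n
    using cInf_lessD[of "(\<lambda>w. norm (x - w)) ` V" "d + 1 / Suc n"] \<open>0 \<in> V\<close>
    by (auto simp: d_def)
  then obtain vs where vs: "\<And>n. vs n \<in> V" "\<And>n. norm (x - vs n) < d + 1 / Suc n"
    by metis
  have lim: "(\<lambda>n. norm (x - vs n)) \<longlonglongrightarrow> d"
  proof (rule real_tendsto_sandwich[where f = "\<lambda>_. d" and h = "\<lambda>n. d + 1 / Suc n"])
    show "(\<lambda>n. d + 1 / Suc n) \<longlonglongrightarrow> d"
      using tendsto_add[OF tendsto_const LIMSEQ_inverse_real_of_nat, of d]
      by (simp add: inverse_eq_divide)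
  qed (use d_le vs in \<open>auto intro!: always_eventually less_imp_le\<close>)
  obtain v where v: "vs \<longlonglongrightarrow> v"
    using closed_csubspace_minimizing_Cauchy[OF V d_le d_nonneg vs(1) lim]
    by (auto simp: Cauchy_convergent_iff convergent_def)
  have "v \<in> V"
    using V closed_sequentially[of V vs v] vs(1) v by (simp add: closed_csubspace_def)
  moreover have "(\<lambda>n. norm (x - vs n)) \<longlonglongrightarrow> norm (x - v)"
    using v by (intro tendsto_intros)
  then have "norm (x - v) = d"
    using LIMSEQ_unique lim by blast
  ultimately show ?thesis
    using d_le by auto
qed

lemma orthogonal_if_nearest_point:
  fixes x :: "'a::complex_inner"
  assumes V: "closed_csubspace V" and "v \<in> V" and nearest: "\<forall>w\<in>V. norm (x - v) \<le> norm (x - w)"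
    and "u \<in> V"
  shows "cinner (x - v) u = 0"
proof (rule ccontr)
  assume ne: "cinner (x - v) u \<noteq> 0"
  then have "u \<noteq> 0" by auto
  define t where "t = cinner (x - v) u / complex_of_real ((norm u)\<^sup>2)"
  have "v + t *\<^sub>C u \<in> V"
    using V \<open>v \<in> V\<close> \<open>u \<in> V\<close> by (simp add: closed_csubspace_def)
  then have "(norm (x - v))\<^sup>2 \<le> (norm ((x - v) - t *\<^sub>C u))\<^sup>2"
    using nearest by (simp add: power_mono algebra_simps)
  also have "\<dots> = (norm (x - v))\<^sup>2 - (cmod (cinner (x - v) u))\<^sup>2 / (norm u)\<^sup>2"
    unfolding t_def by (rule norm_diff_projection_square[OF \<open>u \<noteq> 0\<close>])
  finally show False
    using ne \<open>u \<noteq> 0\<close> by (simp add: divide_le_0_iff)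
qed

lemma orthogonal_projection_exists:
  fixes x :: "'a::{complex_inner,banach}"
  assumes "closed_csubspace V"
  shows "\<exists>v\<in>V. \<forall>u\<in>V. cinner (x - v) u = 0"
  using closed_csubspace_nearest_point[OF assms] orthogonal_if_nearest_point[OF assms] by blast

lemma closed_csubspace_orthogonal_orthogonal:
  fixes x :: "'a::{complex_inner,banach}"
  assumes V: "closed_csubspace V"
    and orth: "\<And>y. (\<And>v. v \<in> V \<Longrightarrow> cinner y v = 0) \<Longrightarrow> cinner x y = 0"
  shows "x \<in> V"
proof -
  obtain v where "v \<in> V" and v: "\<And>u. u \<in> V \<Longrightarrow> cinner (x - v) u = 0"
    using orthogonal_projection_exists[OF V] by blast
  have "cinner x (x - v) = 0" by (rule orth) (rule v)
  moreover have "cinner v (x - v) = 0"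
    using v[OF \<open>v \<in> V\<close>] cinner_commute[of v "x - v"] by simp
  ultimately have "cinner (x - v) (x - v) = 0" by (simp add: cinner_diff_left)
  then show ?thesis using \<open>v \<in> V\<close> by simp
qed

section \<open>Bounded complex-linear maps and their adjoints\<close>

lemma clinear_add: "clinear L \<Longrightarrow> L (x + y) = L x + L y"
  and clinear_scaleC: "clinear L \<Longrightarrow> L (c *\<^sub>C x) = c *\<^sub>C L x"
  by (simp_all add: clinear_def)

lemma clinear_minus: "clinear L \<Longrightarrow> L (- x) = - L x"
  using clinear_scaleC[of L "-1" x] by (simp add: scaleC_minus1_left)

lemma clinear_diff: "clinear L \<Longrightarrow> L (x - y) = L x - L y"
  using clinear_add[of L x "- y"] clinear_minus[of L y] by simp

lemma clinear_zero: "clinear L \<Longrightarrow> L 0 = 0"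
  using clinear_scaleC[of L 0 0] by simp

lemma bounded_clinear_imp_bounded_linear:
  assumes "bounded_clinear L" shows "bounded_linear L"
proof -
  obtain K where "clinear L" and K: "\<And>x. norm (L x) \<le> K * norm x"
    using assms by (auto simp: bounded_clinear_def)
  then show ?thesis
    by (intro bounded_linear_intro[where K = K])
      (simp_all add: clinear_add clinear_scaleC scaleR_scaleC mult.commute)
qed

lemma bounded_linear_scaleC_right: "bounded_linear (\<lambda>x::'a::complex_inner. c *\<^sub>C x)"
  by (rule bounded_linear_intro[where K = "cmod c"])
    (simp_all add: scaleC_add_right scaleR_scaleC scaleC_scaleC mult.commute norm_scaleC)

lemma closed_csubspace_image_bounded_below:
  fixes L :: "'a::{complex_inner,banach} \<Rightarrow> 'b::{complex_inner,banach}"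
  assumes V: "closed_csubspace V" and L: "clinear L" "bounded_linear L"
    and "m > 0" and below: "\<forall>k\<in>V. m * norm k \<le> norm (L k)"
  shows "closed_csubspace (L ` V)"
proof -
  have "complete V"
    using V by (simp add: complete_eq_closed closed_csubspace_def)
  then have "closed (L ` V)"
    using complete_isometric_image[OF \<open>m > 0\<close> closed_csubspace_imp_subspace[OF V] L(2)] below
    by (simp add: complete_eq_closed)
  moreover have "L a + L b \<in> L ` V" if "a \<in> V" "b \<in> V" for a b
  proof -
    have "L (a + b) \<in> L ` V"
      using that V by (simp add: closed_csubspace_def)
    then show ?thesis by (simp add: clinear_add[OF L(1)])
  qed
  moreover have "c *\<^sub>C L a \<in> L ` V" if "a \<in> V" for a c
  proof -
    have "L (c *\<^sub>C a) \<in> L ` V"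
      using that V by (simp add: closed_csubspace_def)
    then show ?thesis by (simp add: clinear_scaleC[OF L(1)])
  qed
  moreover have "L 0 \<in> L ` V"
    using V by (simp add: closed_csubspace_def)
  ultimately show ?thesis
    by (simp add: closed_csubspace_def clinear_zero[OF L(1)])
qed

lemma riesz_representation:
  fixes f :: "'a::{complex_inner,banach} \<Rightarrow> complex"
  assumes add: "\<And>x y. f (x + y) = f x + f y" and scale: "\<And>c x. f (c *\<^sub>C x) = c * f x"
    and bounded: "\<And>x. cmod (f x) \<le> K * norm x"
  shows "\<exists>w. \<forall>x. f x = cinner x w"
proof (cases "\<forall>x. f x = 0")
  case False
  then obtain x0 where "f x0 \<noteq> 0" by blast
  have f_diff: "f (a - b) = f a - f b" for a b
    by (metis add diff_add_cancel eq_diff_eq)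
  have "bounded_linear f"
    by (rule bounded_linear_intro[where K = K])
      (simp_all add: add scaleR_scaleC scale scaleR_conv_of_real bounded mult.commute)
  then have "closed (f -` {0})"
    by (intro closed_vimage closed_singleton linear_continuous_on)
  then have V: "closed_csubspace (f -` {0})"
    using add[of 0 0] by (auto simp: closed_csubspace_def add scale)
  obtain v where "f v = 0" and v: "\<And>u. f u = 0 \<Longrightarrow> cinner (x0 - v) u = 0"
    using orthogonal_projection_exists[OF V, of x0] by auto
  define w0 where "w0 = x0 - v"
  have "f w0 \<noteq> 0" using \<open>f x0 \<noteq> 0\<close> \<open>f v = 0\<close> by (simp add: w0_def f_diff)
  have "w0 \<noteq> 0" using \<open>f w0 \<noteq> 0\<close> add[of 0 0] by auto
  have "f z = cinner z (cnj (f w0 / cinner w0 w0) *\<^sub>C w0)" for z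
  proof -
    have "f (z - (f z / f w0) *\<^sub>C w0) = 0"
      using \<open>f w0 \<noteq> 0\<close> by (simp add: f_diff scale)
    then have "cinner (z - (f z / f w0) *\<^sub>C w0) w0 = 0"
      using v by (metis cinner_commute complex_cnj_zero w0_def)
    then have "cinner z w0 = (f z / f w0) * cinner w0 w0"
      by (simp add: cinner_simps)
    then show ?thesis
      using \<open>f w0 \<noteq> 0\<close> \<open>w0 \<noteq> 0\<close> by (simp add: cinner_scaleC_right field_simps)
  qed
  then show ?thesis by blast
qed (metis cinner_zero_right)

lemma cadjoint_eqI:
  assumes "\<And>x. cinner (L x) y = cinner x w" shows "cadjoint L y = w"
  unfolding cadjoint_def
proof (rule the_equality)
  fix w' assume "\<forall>x. cinner (L x) y = cinner x w'"
  then show "w' = w" using assms by (intro cinner_ext_right) metis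
qed (use assms in blast)

lemma cinner_cadjoint:
  fixes L :: "'a::{complex_inner,banach} \<Rightarrow> 'b::complex_inner"
  assumes "bounded_clinear L"
  shows "cinner (L x) y = cinner x (cadjoint L y)"
proof -
  obtain K where L: "clinear L" and K: "\<And>x. norm (L x) \<le> K * norm x"
    using assms by (auto simp: bounded_clinear_def)
  have "\<exists>w. \<forall>x. cinner (L x) y = cinner x w"
  proof (rule riesz_representation[where K = "K * norm y"])
    show "cmod (cinner (L x) y) \<le> K * norm y * norm x" for x
      using cinner_Cauchy_Schwarz[of "L x" y] mult_right_mono[OF K[of x], of "norm y"]
      by (simp add: mult_ac)
  qed (simp_all add: L clinear_add clinear_scaleC cinner_simps)
  then obtain w where "\<forall>x. cinner (L x) y = cinner x w" ..
  then show ?thesis by (simp add: cadjoint_eqI)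
qed

lemma cinner_cadjoint_left:
  fixes L :: "'a::{complex_inner,banach} \<Rightarrow> 'b::complex_inner"
  assumes "bounded_clinear L"
  shows "cinner (cadjoint L y) x = cinner y (L x)"
  by (metis assms cinner_cadjoint cinner_commute)

lemma bounded_clinear_cadjoint:
  fixes L :: "'a::{complex_inner,banach} \<Rightarrow> 'b::complex_inner"
  assumes L: "bounded_clinear L"
  shows "bounded_clinear (cadjoint L)"
proof -
  obtain K where K: "\<And>x. norm (L x) \<le> K * norm x"
    using L by (auto simp: bounded_clinear_def)
  have "clinear (cadjoint L)"
    unfolding clinear_def
    by (auto intro!: cadjoint_eqI simp: cinner_simps cinner_cadjoint[OF L, symmetric])
  moreover have "norm (cadjoint L y) \<le> \<bar>K\<bar> * norm y" for y
  proof -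
    define w where "w = cadjoint L y"
    have "(norm w)\<^sup>2 = Re (cinner (L w) y)"
      by (simp add: norm_square_eq_Re_cinner cinner_cadjoint[OF L] w_def)
    also have "\<dots> \<le> norm (L w) * norm y"
      using complex_Re_le_cmod cinner_Cauchy_Schwarz order_trans by blast
    also have "\<dots> \<le> K * norm w * norm y"
      using K by (simp add: mult_right_mono)
    finally have "norm w * norm w \<le> (K * norm y) * norm w"
      by (simp add: power2_eq_square mult_ac)
    then have "norm w \<le> K * norm y" if "w \<noteq> 0"
      using that by (simp add: mult_le_cancel_right)
    moreover have "K * norm y \<le> \<bar>K\<bar> * norm y"
      by (simp add: mult_right_mono)
    ultimately show ?thesis
      unfolding w_def[symmetric] by (cases "w = 0") auto
  qed
  ultimately show ?thesis by (auto simp: bounded_clinear_def)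
qed

lemma the_cinner_representer_eq_cadjoint:
  fixes L :: "'a::{complex_inner,banach} \<Rightarrow> 'b::complex_inner"
  assumes "bounded_clinear L"
  shows "(THE w. \<forall>z. cinner w z = cinner x (L z)) = cadjoint L x"
  by (rule the_equality)
    (auto intro: cinner_ext_left simp: cinner_cadjoint_left[OF assms])

section \<open>Contractions and their defect ranges\<close>

lemma mem_closed_if_approximable:
  fixes y :: "'a::real_normed_vector"
  assumes "closed S" and approx: "\<And>\<delta>. 0 < \<delta> \<Longrightarrow> \<delta> < 1/2 \<Longrightarrow> \<exists>g\<in>S. norm (g - y) \<le> \<delta> * M"
  shows "y \<in> S"
proof -
  have "\<exists>g\<in>S. dist g y < e" if "e > 0" for e
  proof -
    define \<delta> where "\<delta> = min (1/4) (e / (2 * (\<bar>M\<bar> + 1)))"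
    have "0 < \<delta>" "\<delta> < 1/2"
      using that by (auto simp: \<delta>_def)
    then obtain g where "g \<in> S" and g: "norm (g - y) \<le> \<delta> * M"
      using approx by blast
    have "\<delta> * M \<le> \<delta> * (\<bar>M\<bar> + 1)"
      using \<open>0 < \<delta>\<close> by (intro mult_left_mono) auto
    also have "\<dots> \<le> e / 2"
      unfolding \<delta>_def by (simp add: min_def field_simps add_pos_nonneg)
    finally have "norm (g - y) < e"
      using g that by linarith
    then show ?thesis
      using \<open>g \<in> S\<close> by (auto simp: dist_norm)
  qed
  then show ?thesis
    using closed_approachable[OF assms(1)] by blast
qed

lemma le_double_if_one_minus_mult_le:
  fixes \<delta> a b :: real
  assumes "0 \<le> \<delta>" "\<delta> < 1/2" "0 \<le> a" "(1 - \<delta>) * a \<le> b"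
  shows "a \<le> 2 * b"
proof -
  have "(1/2) * a \<le> (1 - \<delta>) * a"
    using assms by (intro mult_right_mono) auto
  then show ?thesis using assms(4) by linarith
qed

locale contraction =
  fixes T :: "'a::{complex_inner,banach} \<Rightarrow> 'a"
  assumes bounded_clinear_T: "bounded_clinear T" and norm_T_le: "\<And>x. norm (T x) \<le> norm x"
begin

lemma clinear_T: "clinear T"
  using bounded_clinear_T by (simp add: bounded_clinear_def)

lemmas T_add = clinear_add[OF clinear_T] and T_scaleC = clinear_scaleC[OF clinear_T]
  and T_diff = clinear_diff[OF clinear_T]

lemma bounded_linear_T: "bounded_linear T"
  by (rule bounded_clinear_imp_bounded_linear[OF bounded_clinear_T])

abbreviation K where "K \<equiv> KK T"

lemma mem_K: "x \<in> K \<longleftrightarrow> cadjoint T (T x) = x"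
  by (auto simp: KK_def)

lemma closed_csubspace_K: "closed_csubspace K"
proof -
  have adj: "bounded_clinear (cadjoint T)"
    by (rule bounded_clinear_cadjoint[OF bounded_clinear_T])
  define D where "D x = x - cadjoint T (T x)" for x
  have "clinear D"
    using clinear_T adj
    by (simp add: clinear_def D_def bounded_clinear_def scaleC_diff_right algebra_simps)
  moreover have "closed {x. D x = 0}"
    unfolding D_def
    by (intro closed_Collect_eq continuous_intros linear_continuous_on bounded_linear_T
        bounded_linear_compose[OF bounded_clinear_imp_bounded_linear[OF adj]])
  ultimately show ?thesis
    by (simp add: closed_csubspace_def KK_def clinear_add clinear_scaleC clinear_zero flip: D_def)
qed

lemma K_add: "a \<in> K \<Longrightarrow> b \<in> K \<Longrightarrow> a + b \<in> K"
  and K_scaleC: "a \<in> K \<Longrightarrow> c *\<^sub>C a \<in> K" and closed_K: "closed K"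
  using closed_csubspace_K by (auto simp: closed_csubspace_def)

lemma K_diff: "a \<in> K \<Longrightarrow> b \<in> K \<Longrightarrow> a - b \<in> K"
  by (rule closed_csubspace_diff[OF closed_csubspace_K])

lemma cinner_T_K: "k \<in> K \<Longrightarrow> cinner (T x) (T k) = cinner x k"
  by (simp add: cinner_cadjoint[OF bounded_clinear_T] mem_K)

lemma norm_T_K: "k \<in> K \<Longrightarrow> norm (T k) = norm k"
  using cinner_T_K[of k k] by (simp add: cinner_self flip: of_real_power)

lemma inj_on_T_K: "inj_on T K"
  by (rule inj_onI) (metis K_diff T_diff norm_T_K norm_eq_zero eq_iff_diff_eq_0)

lemma norm_I_minus_T_ge: "(1 - cmod c) * norm k \<le> norm (k - c *\<^sub>C T k)"
proof -
  have "cmod c * norm (T k) \<le> cmod c * norm k"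
    by (intro mult_left_mono norm_T_le) simp
  then show ?thesis
    using norm_triangle_ineq2[of k "c *\<^sub>C T k"] by (simp add: norm_scaleC algebra_simps)
qed

lemma norm_T_minus_I_ge: "k \<in> K \<Longrightarrow> (1 - cmod c) * norm k \<le> norm (T k - c *\<^sub>C k)"
  using norm_triangle_ineq2[of "T k" "c *\<^sub>C k"] by (simp add: norm_scaleC norm_T_K algebra_simps)

(* For |c| < 1 the orthogonal complements of these ranges are fst ` Nl T True (cnj c) and
   snd ` Nl T False (cnj c), respectively. *)
definition ran_I_minus_T :: "complex \<Rightarrow> 'a set" where
  "ran_I_minus_T c = (\<lambda>k. k - c *\<^sub>C T k) ` K"

definition ran_T_minus_I :: "complex \<Rightarrow> 'a set" where
  "ran_T_minus_I c = (\<lambda>k. T k - c *\<^sub>C k) ` K"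

lemma ran_I_minus_T_0: "ran_I_minus_T 0 = K"
  and ran_T_minus_I_0: "ran_T_minus_I 0 = T ` K"
  by (simp_all add: ran_I_minus_T_def ran_T_minus_I_def)

lemma closed_csubspace_ran_I_minus_T:
  assumes "cmod c < 1" shows "closed_csubspace (ran_I_minus_T c)"
  unfolding ran_I_minus_T_def
proof (rule closed_csubspace_image_bounded_below[OF closed_csubspace_K])
  show "clinear (\<lambda>k. k - c *\<^sub>C T k)"
    by (simp add: clinear_def T_add T_scaleC scaleC_add_right scaleC_scaleC mult.commute
        scaleC_diff_right)
  show "bounded_linear (\<lambda>k. k - c *\<^sub>C T k)"
    by (intro bounded_linear_sub bounded_linear_ident
        bounded_linear_compose[OF bounded_linear_scaleC_right bounded_linear_T])
  show "\<forall>k\<in>K. (1 - cmod c) * norm k \<le> norm (k - c *\<^sub>C T k)"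
    by (simp add: norm_I_minus_T_ge)
qed (use assms in simp)

lemma closed_csubspace_ran_T_minus_I:
  assumes "cmod c < 1" shows "closed_csubspace (ran_T_minus_I c)"
  unfolding ran_T_minus_I_def
proof (rule closed_csubspace_image_bounded_below[OF closed_csubspace_K])
  show "clinear (\<lambda>k. T k - c *\<^sub>C k)"
    by (simp add: clinear_def T_add T_scaleC scaleC_add_right scaleC_scaleC mult.commute
        scaleC_diff_right)
  show "bounded_linear (\<lambda>k. T k - c *\<^sub>C k)"
    by (intro bounded_linear_sub bounded_linear_T bounded_linear_scaleC_right)
  show "\<forall>k\<in>K. (1 - cmod c) * norm k \<le> norm (T k - c *\<^sub>C k)"
    by (simp add: norm_T_minus_I_ge)
qed (use assms in simp)

lemma closed_csubspace_T_K: "closed_csubspace (T ` K)"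
  using closed_csubspace_ran_T_minus_I[of 0] by (simp add: ran_T_minus_I_0)

lemma mem_ran_I_minus_T: "x \<in> ran_I_minus_T c \<longleftrightarrow> (\<exists>k\<in>K. x = k - c *\<^sub>C T k)"
  by (auto simp: ran_I_minus_T_def)

lemma mem_ran_T_minus_I: "x \<in> ran_T_minus_I c \<longleftrightarrow> (\<exists>k\<in>K. x = T k - c *\<^sub>C k)"
  by (auto simp: ran_T_minus_I_def)

lemma T_K_diff: "a \<in> T ` K \<Longrightarrow> b \<in> T ` K \<Longrightarrow> a - b \<in> T ` K"
  by (rule closed_csubspace_diff[OF closed_csubspace_T_K])

lemma T_K_add: "a \<in> T ` K \<Longrightarrow> b \<in> T ` K \<Longrightarrow> a + b \<in> T ` K"
  and T_K_scaleC: "a \<in> T ` K \<Longrightarrow> c *\<^sub>C a \<in> T ` K"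
  using closed_csubspace_T_K by (auto simp: closed_csubspace_def)

lemma mem_T_K_if_in_ran_T_minus_I:
  assumes "\<And>c. 0 < cmod c \<Longrightarrow> cmod c < 1 \<Longrightarrow> r \<in> ran_T_minus_I c"
  shows "r \<in> T ` K"
proof (rule mem_closed_if_approximable[where M = "2 * norm r"])
  show "closed (T ` K)"
    using closed_csubspace_T_K by (simp add: closed_csubspace_def)
  fix \<delta> :: real assume \<delta>: "0 < \<delta>" "\<delta> < 1/2"
  obtain g where "g \<in> K" and r: "r = T g - complex_of_real \<delta> *\<^sub>C g"
    using assms[of "complex_of_real \<delta>"] \<delta> by (auto simp: mem_ran_T_minus_I)
  have "norm g \<le> 2 * norm r"
    using norm_T_minus_I_ge[OF \<open>g \<in> K\<close>, of "complex_of_real \<delta>"] \<delta>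
    by (intro le_double_if_one_minus_mult_le[of \<delta>]) (auto simp: r)
  then have "norm (T g - r) \<le> \<delta> * (2 * norm r)"
    using \<delta> by (simp add: r norm_scaleC mult_left_mono)
  then show "\<exists>g'\<in>T ` K. norm (g' - r) \<le> \<delta> * (2 * norm r)"
    using \<open>g \<in> K\<close> by blast
qed

lemma mem_K_if_in_ran_I_minus_T:
  assumes "\<And>c. 0 < cmod c \<Longrightarrow> cmod c < 1 \<Longrightarrow> y \<in> ran_I_minus_T c"
  shows "y \<in> K"
proof (rule mem_closed_if_approximable[OF closed_K, where M = "2 * norm y"])
  fix \<delta> :: real assume \<delta>: "0 < \<delta>" "\<delta> < 1/2"
  obtain f where "f \<in> K" and y: "y = f - complex_of_real \<delta> *\<^sub>C T f"
    using assms[of "complex_of_real \<delta>"] \<delta> by (auto simp: mem_ran_I_minus_T)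
  have "norm f \<le> 2 * norm y"
    using norm_I_minus_T_ge[of "complex_of_real \<delta>" f] \<delta>
    by (intro le_double_if_one_minus_mult_le[of \<delta>]) (auto simp: y)
  then have "norm (f - y) \<le> \<delta> * (2 * norm y)"
    using \<delta> norm_T_le[of f] by (simp add: y norm_scaleC mult_left_mono)
  then show "\<exists>g\<in>K. norm (g - y) \<le> \<delta> * (2 * norm y)"
    using \<open>f \<in> K\<close> by blast
qed

(* A closed subspace that reduces T and on which T is unitary, hence trivial when T is
   completely non-unitary. *)
definition unitary_core :: "'a set" where
  "unitary_core = {r \<in> K. \<forall>c. 0 < cmod c \<and> cmod c < 1 \<longrightarrow>
     r \<in> ran_T_minus_I c \<and> T r \<in> ran_I_minus_T c}"

lemma closed_csubspace_unitary_core: "closed_csubspace unitary_core"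
proof -
  have "unitary_core = K \<inter> (\<Inter>c\<in>{c. 0 < cmod c \<and> cmod c < 1}. ran_T_minus_I c \<inter> T -` ran_I_minus_T c)"
    by (auto simp: unitary_core_def)
  also have "closed \<dots>"
    using closed_csubspace_ran_T_minus_I closed_csubspace_ran_I_minus_T
    by (intro closed_Int closed_K closed_INT ballI closed_vimage linear_continuous_on bounded_linear_T)
      (auto simp: closed_csubspace_def)
  finally have "closed unitary_core" .
  moreover have "0 \<in> unitary_core"
    using closed_csubspace_ran_T_minus_I closed_csubspace_ran_I_minus_T closed_csubspace_K
    by (auto simp: unitary_core_def closed_csubspace_def clinear_zero[OF clinear_T])
  ultimately show ?thesis
    using closed_csubspace_ran_T_minus_I closed_csubspace_ran_I_minus_T K_add K_scaleC
    by (auto simp: closed_csubspace_def unitary_core_def T_add T_scaleC)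
qed

lemma T_mem_ran_T_minus_I:
  assumes "x \<in> K" "x \<in> ran_T_minus_I c" shows "T x \<in> ran_T_minus_I c"
proof -
  obtain g where "g \<in> K" and g: "x = T g - c *\<^sub>C g"
    using assms(2) by (auto simp: mem_ran_T_minus_I)
  have "T g = x + c *\<^sub>C g"
    by (simp add: g)
  then have "T g \<in> K"
    using assms(1) \<open>g \<in> K\<close> by (simp add: K_add K_scaleC)
  then show ?thesis
    by (auto simp: mem_ran_T_minus_I g T_diff T_scaleC)
qed

lemma T_mem_ran_I_minus_T:
  assumes "x \<in> K" "x \<in> ran_I_minus_T c" "c \<noteq> 0" shows "T x \<in> ran_I_minus_T c"
proof -
  obtain f where "f \<in> K" and f: "x = f - c *\<^sub>C T f"
    using assms(2) by (auto simp: mem_ran_I_minus_T)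
  have "c *\<^sub>C T f = f - x"
    by (simp add: f)
  then have "c *\<^sub>C T f \<in> K"
    using \<open>f \<in> K\<close> assms(1) by (simp add: K_diff)
  then have "T f \<in> K"
    using closed_csubspace_scaleC_iff[OF closed_csubspace_K assms(3)] by blast
  then show ?thesis
    by (auto simp: mem_ran_I_minus_T f T_diff T_scaleC)
qed

lemma mem_ran_T_minus_I_if_T_mem:
  assumes "x \<in> K" "T x \<in> ran_T_minus_I c" "c \<noteq> 0" shows "x \<in> ran_T_minus_I c"
proof -
  obtain g where "g \<in> K" and g: "T x = T g - c *\<^sub>C g"
    using assms(2) by (auto simp: mem_ran_T_minus_I)
  have "c *\<^sub>C g = T g - T x"
    by (simp add: g)
  then have "c *\<^sub>C g \<in> T ` K"
    using \<open>g \<in> K\<close> assms(1) by (simp add: T_K_diff)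
  then obtain h where "h \<in> K" and h: "g = T h"
    using closed_csubspace_scaleC_iff[OF closed_csubspace_T_K assms(3)] by blast
  have "g - c *\<^sub>C h \<in> K"
    using \<open>g \<in> K\<close> \<open>h \<in> K\<close> by (simp add: K_diff K_scaleC)
  moreover have "T (g - c *\<^sub>C h) = T x"
    by (simp add: T_diff T_scaleC g flip: h)
  ultimately have "x = T h - c *\<^sub>C h"
    using inj_on_T_K assms(1) by (auto simp: inj_on_def h)
  then show ?thesis
    using \<open>h \<in> K\<close> by (auto simp: mem_ran_T_minus_I)
qed

lemma mem_ran_I_minus_T_if_T_mem:
  assumes "x \<in> K" "T x \<in> ran_I_minus_T c" shows "x \<in> ran_I_minus_T c"
proof -
  obtain f where "f \<in> K" and f: "T x = f - c *\<^sub>C T f"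
    using assms(2) by (auto simp: mem_ran_I_minus_T)
  have "f = T x + c *\<^sub>C T f"
    by (simp add: f)
  moreover have "T x + c *\<^sub>C T f \<in> T ` K"
    using assms(1) \<open>f \<in> K\<close> by (intro T_K_add T_K_scaleC imageI)
  ultimately obtain h where "h \<in> K" and h: "f = T h"
    by auto
  have "h - c *\<^sub>C T h \<in> K"
    using \<open>h \<in> K\<close> \<open>f \<in> K\<close> by (simp add: K_diff K_scaleC flip: h)
  moreover have "T (h - c *\<^sub>C T h) = T x"
    by (simp add: T_diff T_scaleC f h)
  ultimately have "x = h - c *\<^sub>C T h"
    using inj_on_T_K assms(1) by (auto simp: inj_on_def)
  then show ?thesis
    using \<open>h \<in> K\<close> by (auto simp: mem_ran_I_minus_T)
qed

lemma T_unitary_core: assumes "r \<in> unitary_core" shows "T r \<in> unitary_core"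
proof -
  have "r \<in> K" and r: "\<And>c. 0 < cmod c \<Longrightarrow> cmod c < 1 \<Longrightarrow> r \<in> ran_T_minus_I c \<and> T r \<in> ran_I_minus_T c"
    using assms by (auto simp: unitary_core_def)
  have "T r \<in> K"
    using r by (intro mem_K_if_in_ran_I_minus_T) blast
  then show ?thesis
    using \<open>r \<in> K\<close> r T_mem_ran_T_minus_I T_mem_ran_I_minus_T
    by (auto simp: unitary_core_def)
qed

lemma cadjoint_unitary_core:
  assumes "r \<in> unitary_core" shows "cadjoint T r \<in> unitary_core" and "T (cadjoint T r) = r"
proof -
  have "r \<in> K" and r: "\<And>c. 0 < cmod c \<Longrightarrow> cmod c < 1 \<Longrightarrow> r \<in> ran_T_minus_I c \<and> T r \<in> ran_I_minus_T c"
    using assms by (auto simp: unitary_core_def)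
  have "r \<in> T ` K"
    using r by (intro mem_T_K_if_in_ran_T_minus_I) blast
  then obtain k where "k \<in> K" and k: "r = T k"
    by blast
  then have adj: "cadjoint T r = k"
    by (simp add: mem_K)
  then show "T (cadjoint T r) = r"
    by (simp add: k)
  have "k \<in> ran_T_minus_I c \<and> T k \<in> ran_I_minus_T c" if c: "0 < cmod c" "cmod c < 1" for c
  proof
    have "c \<noteq> 0" using c by auto
    show "k \<in> ran_T_minus_I c"
      using mem_ran_T_minus_I_if_T_mem[OF \<open>k \<in> K\<close> _ \<open>c \<noteq> 0\<close>] r[OF c] by (simp add: k)
    show "T k \<in> ran_I_minus_T c"
      using mem_ran_I_minus_T_if_T_mem[OF \<open>r \<in> K\<close>] r[OF c] by (simp add: k)
  qed
  then show "cadjoint T r \<in> unitary_core"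
    using \<open>k \<in> K\<close> by (simp add: unitary_core_def adj)
qed

lemma unitary_core_trivial:
  assumes "completely_non_unitary T" and "r \<in> unitary_core"
  shows "r = 0"
proof (rule ccontr)
  assume "r \<noteq> 0"
  have "\<forall>x\<in>unitary_core. cadjoint T (T x) = x \<and> T (cadjoint T x) = x"
    using cadjoint_unitary_core(2) by (auto simp: unitary_core_def mem_K)
  then show False
    using assms \<open>r \<noteq> 0\<close> closed_csubspace_unitary_core T_unitary_core cadjoint_unitary_core(1)
    unfolding completely_non_unitary_def by blast
qed

lemma T_diff_mem_ran_I_minus_T:
  assumes "p \<in> K" "j \<in> K" "p - c *\<^sub>C T j \<in> ran_I_minus_T c" "c \<noteq> 0"
  shows "T (p - j) \<in> ran_I_minus_T c"
proof -
  obtain k where "k \<in> K" and k: "p - c *\<^sub>C T j = k - c *\<^sub>C T k"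
    using assms(3) by (auto simp: mem_ran_I_minus_T)
  define f where "f = T k - T j"
  have "k - p = c *\<^sub>C T k - c *\<^sub>C T j"
    using k by (simp add: algebra_simps)
  then have cf: "c *\<^sub>C f = k - p"
    by (simp add: f_def scaleC_diff_right)
  then have "c *\<^sub>C f \<in> K"
    using \<open>k \<in> K\<close> assms(1) by (simp add: K_diff)
  then have "f \<in> K"
    using closed_csubspace_scaleC_iff[OF closed_csubspace_K assms(4)] by blast
  have "c *\<^sub>C T f = T k - T p"
    by (simp add: cf T_diff flip: T_scaleC)
  then have "T (p - j) = f - c *\<^sub>C T f"
    by (simp add: f_def T_diff)
  then show ?thesis
    using \<open>f \<in> K\<close> by (auto simp: mem_ran_I_minus_T)
qed

lemma diff_mem_ran_T_minus_I:
  assumes "j \<in> K" "c *\<^sub>C p - T j \<in> ran_T_minus_I c" "c \<noteq> 0"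
  shows "p - j \<in> ran_T_minus_I c"
proof -
  obtain e where "e \<in> K" and e: "c *\<^sub>C p - T j = T e - c *\<^sub>C e"
    using assms(2) by (auto simp: mem_ran_T_minus_I)
  define g where "g = (1/c) *\<^sub>C (e + j)"
  have "g \<in> K"
    using \<open>e \<in> K\<close> assms(1) by (simp add: g_def K_add K_scaleC)
  have cg: "c *\<^sub>C g = e + j"
    using assms(3) by (simp add: g_def scaleC_scaleC scaleC_one)
  have "c *\<^sub>C T g = T e + T j"
    by (simp add: cg T_add flip: T_scaleC)
  also have "\<dots> = c *\<^sub>C (p + e)"
    using e by (simp add: scaleC_add_right algebra_simps)
  finally have "p - j = T g - c *\<^sub>C g"
    using assms(3) by (simp add: scaleC_cancel_left cg)
  then show ?thesis
    using \<open>g \<in> K\<close> by (auto simp: mem_ran_T_minus_I)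
qed

lemma mem_A_T_if_in_ranges:
  assumes cnu: "completely_non_unitary T"
    and ran_I_T: "\<And>c. cmod c < 1 \<Longrightarrow> p - c *\<^sub>C q \<in> ran_I_minus_T c"
    and ran_T_I: "\<And>c. cmod c < 1 \<Longrightarrow> c *\<^sub>C p - q \<in> ran_T_minus_I c"
  shows "(p, q) \<in> A_T T"
proof -
  have "p \<in> K"
    using ran_I_T[of 0] by (simp add: ran_I_minus_T_0)
  have "- q \<in> T ` K"
    using ran_T_I[of 0] by (simp add: ran_T_minus_I_0)
  then have "q \<in> T ` K"
    using T_K_scaleC[of "- q" "-1"] by (simp add: scaleC_minus1_left)
  then obtain j where "j \<in> K" and q: "q = T j"
    by blast
  define r where "r = p - j"
  have "r \<in> K"
    using \<open>p \<in> K\<close> \<open>j \<in> K\<close> by (simp add: r_def K_diff)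
  have "r \<in> ran_T_minus_I c \<and> T r \<in> ran_I_minus_T c" if "0 < cmod c" "cmod c < 1" for c
    using that \<open>p \<in> K\<close> \<open>j \<in> K\<close> ran_I_T[of c] ran_T_I[of c]
    by (auto simp: r_def q intro: T_diff_mem_ran_I_minus_T diff_mem_ran_T_minus_I)
  then have "r = 0"
    using \<open>r \<in> K\<close> by (intro unitary_core_trivial[OF cnu]) (simp add: unitary_core_def)
  then show ?thesis
    using \<open>p \<in> K\<close> by (auto simp: A_T_def r_def q)
qed

end

section \<open>Boundary quadruples and the contractive Weyl function\<close>

lemma mult_le_if_mult_square_le:
  fixes m a b :: real
  assumes "0 \<le> m" "m \<le> 1" "m * a\<^sup>2 \<le> b\<^sup>2" "0 \<le> b"
  shows "m * a \<le> b"
proof -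
  have "(m * a)\<^sup>2 = m * (m * a\<^sup>2)"
    by (simp add: power2_eq_square)
  also have "\<dots> \<le> m * b\<^sup>2"
    using assms by (simp add: mult_left_mono)
  also have "\<dots> \<le> b\<^sup>2"
    using assms by (simp add: mult_left_le_one_le)
  finally show ?thesis
    using assms(4) by (rule power2_le_imp_le)
qed

lemma kform_self_N_plus:
  "kform (u, l *\<^sub>C u) (u, l *\<^sub>C u) = \<i> * complex_of_real ((1 - (cmod l)\<^sup>2) * (norm u)\<^sup>2)"
  by (simp add: kform_def cinner_self norm_scaleC power_mult_distrib algebra_simps)

lemma kform_self_N_minus:
  "kform (l *\<^sub>C u, u) (l *\<^sub>C u, u) = - \<i> * complex_of_real ((1 - (cmod l)\<^sup>2) * (norm u)\<^sup>2)"
  by (simp add: kform_def cinner_self norm_scaleC power_mult_distrib algebra_simps)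

definition weyl_identities ::
  "('a::complex_inner \<Rightarrow> 'a) \<Rightarrow> ('a \<times> 'a \<Rightarrow> 'p::complex_inner) \<Rightarrow> ('a \<times> 'a \<Rightarrow> 'm::complex_inner)
     \<Rightarrow> (complex \<Rightarrow> 'p \<Rightarrow> 'm) \<Rightarrow> (bool \<Rightarrow> complex \<Rightarrow> 'a \<Rightarrow> complex)
     \<Rightarrow> (bool \<Rightarrow> complex \<Rightarrow> 'a \<Rightarrow> complex) \<Rightarrow> 'p \<Rightarrow> 'm \<Rightarrow> bool" where
  "weyl_identities T Gp Gm B s t xp xm \<longleftrightarrow>
     (\<forall>l. norm l < 1 \<longrightarrow> l *\<^sub>C f_plus T Gm s l - f_plus T Gm t l = B l xp - xm)
   \<and> (\<forall>l. norm l < 1 \<longrightarrow> f_minus T Gp s l - l *\<^sub>C f_minus T Gp t l = xp - cadjoint (B (cnj l)) xm)"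

locale contractive_weyl = contraction T for T :: "'a::{complex_inner,banach} \<Rightarrow> 'a" +
  fixes Gp :: "'a \<times> 'a \<Rightarrow> 'p::{complex_inner,banach}"
    and Gm :: "'a \<times> 'a \<Rightarrow> 'm::{complex_inner,banach}"
    and B :: "complex \<Rightarrow> 'p \<Rightarrow> 'm"
  assumes boundary_quadruple: "boundary_quadruple T Gp Gm"
    and weyl: "contractive_weyl_function T Gp Gm B"
begin

abbreviation D where "D \<equiv> s_orth (A_T T)"

lemma mem_D: "a \<in> D \<longleftrightarrow> (\<forall>k\<in>K. cinner (fst a) k = cinner (snd a) (T k))"
  by (auto simp: s_orth_def A_T_def kform_def)

lemma D_add: "a \<in> D \<Longrightarrow> b \<in> D \<Longrightarrow> a + b \<in> D"
  by (simp add: mem_D cinner_simps)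

lemma D_scaleC: "a \<in> D \<Longrightarrow> (c *\<^sub>C fst a, c *\<^sub>C snd a) \<in> D"
  by (simp add: mem_D cinner_simps)

lemma A_T_subset_D: "A_T T \<subseteq> D"
proof
  fix a assume "a \<in> A_T T"
  then obtain k where "k \<in> K" "a = (k, T k)"
    by (auto simp: A_T_def)
  then show "a \<in> D"
    by (simp add: mem_D cinner_T_K)
qed

lemma Gp_add: "a \<in> D \<Longrightarrow> b \<in> D \<Longrightarrow> Gp (a + b) = Gp a + Gp b"
  and Gm_add: "a \<in> D \<Longrightarrow> b \<in> D \<Longrightarrow> Gm (a + b) = Gm a + Gm b"
  and Gp_scaleC: "a \<in> D \<Longrightarrow> Gp (c *\<^sub>C fst a, c *\<^sub>C snd a) = c *\<^sub>C Gp a"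
  and Gm_scaleC: "a \<in> D \<Longrightarrow> Gm (c *\<^sub>C fst a, c *\<^sub>C snd a) = c *\<^sub>C Gm a"
  and Gamma_surj: "\<exists>a\<in>D. Gp a = xp \<and> Gm a = xm"
  and green_identity:
    "a \<in> D \<Longrightarrow> b \<in> D \<Longrightarrow> kform a b = \<i> * cinner (Gp a) (Gp b) - \<i> * cinner (Gm a) (Gm b)"
  using boundary_quadruple unfolding boundary_quadruple_def Let_def by blast+

lemma bij_Gp: "cmod l < 1 \<Longrightarrow> bij_betw Gp (Nl T True l) UNIV"
  and Gm_eq_B_Gp: "cmod l < 1 \<Longrightarrow> a \<in> Nl T True l \<Longrightarrow> Gm a = B l (Gp a)"
  and bij_Gm: "cmod l < 1 \<Longrightarrow> bij_betw Gm (Nl T False l) UNIV"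
  and Gp_eq_B_adjoint_Gm:
    "cmod l < 1 \<Longrightarrow> a \<in> Nl T False l \<Longrightarrow> Gp a = cadjoint (B (cnj l)) (Gm a)"
  using weyl unfolding contractive_weyl_function_def by blast+

lemma mem_N_plus: "a \<in> Nl T True l \<longleftrightarrow> a \<in> D \<and> snd a = l *\<^sub>C fst a"
  by (cases a) (auto simp: Nl_def)

lemma mem_N_minus: "a \<in> Nl T False l \<longleftrightarrow> a \<in> D \<and> fst a = l *\<^sub>C snd a"
  by (cases a) (auto simp: Nl_def)

lemma gamma_p_eq_the_inv_into: "gamma_p T Gp l = the_inv_into (Nl T True l) Gp"
  by (simp add: fun_eq_iff gamma_p_def the_inv_into_def)

lemma gamma_m_eq_the_inv_into: "gamma_m T Gm l = the_inv_into (Nl T False l) Gm"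
  by (simp add: fun_eq_iff gamma_m_def the_inv_into_def)

lemma gamma_p_mem: "cmod l < 1 \<Longrightarrow> gamma_p T Gp l z \<in> Nl T True l"
  and Gp_gamma_p: "cmod l < 1 \<Longrightarrow> Gp (gamma_p T Gp l z) = z"
  and gamma_p_Gp: "cmod l < 1 \<Longrightarrow> a \<in> Nl T True l \<Longrightarrow> gamma_p T Gp l (Gp a) = a"
  using bij_Gp[of l]
  by (auto simp: gamma_p_eq_the_inv_into bij_betw_def the_inv_into_into f_the_inv_into_f
      the_inv_into_f_f)

lemma gamma_m_mem: "cmod l < 1 \<Longrightarrow> gamma_m T Gm l z \<in> Nl T False l"
  and Gm_gamma_m: "cmod l < 1 \<Longrightarrow> Gm (gamma_m T Gm l z) = z"
  and gamma_m_Gm: "cmod l < 1 \<Longrightarrow> a \<in> Nl T False l \<Longrightarrow> gamma_m T Gm l (Gm a) = a"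
  using bij_Gm[of l]
  by (auto simp: gamma_m_eq_the_inv_into bij_betw_def the_inv_into_into f_the_inv_into_f
      the_inv_into_f_f)

lemma gamma_p_eq_phi_p: "cmod l < 1 \<Longrightarrow> gamma_p T Gp l z = (phi_p T Gp l z, l *\<^sub>C phi_p T Gp l z)"
  using gamma_p_mem[of l z] by (cases "gamma_p T Gp l z") (auto simp: mem_N_plus phi_p_def)

lemma gamma_m_eq_phi_m: "cmod l < 1 \<Longrightarrow> gamma_m T Gm l z = (l *\<^sub>C phi_m T Gm l z, phi_m T Gm l z)"
  using gamma_m_mem[of l z] by (cases "gamma_m T Gm l z") (auto simp: mem_N_minus phi_m_def)

lemma phi_p_eqI:
  assumes "cmod l < 1" "(u, l *\<^sub>C u) \<in> D" "Gp (u, l *\<^sub>C u) = z"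
  shows "phi_p T Gp l z = u"
  using gamma_p_Gp[OF assms(1), of "(u, l *\<^sub>C u)"] assms by (simp add: mem_N_plus phi_p_def)

lemma phi_m_eqI:
  assumes "cmod l < 1" "(l *\<^sub>C u, u) \<in> D" "Gm (l *\<^sub>C u, u) = z"
  shows "phi_m T Gm l z = u"
  using gamma_m_Gm[OF assms(1), of "(l *\<^sub>C u, u)"] assms by (simp add: mem_N_minus phi_m_def)

lemma gamma_p_D: "cmod l < 1 \<Longrightarrow> gamma_p T Gp l z \<in> D"
  using gamma_p_mem by (auto simp: mem_N_plus)

lemma gamma_m_D: "cmod l < 1 \<Longrightarrow> gamma_m T Gm l z \<in> D"
  using gamma_m_mem by (auto simp: mem_N_minus)

lemma clinear_phi_p: assumes "cmod l < 1" shows "clinear (phi_p T Gp l)"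
  unfolding clinear_def
proof safe
  fix z1 z2
  have "gamma_p T Gp l z1 + gamma_p T Gp l z2 \<in> D"
    using assms by (simp add: D_add gamma_p_D)
  moreover have "Gp (gamma_p T Gp l z1 + gamma_p T Gp l z2) = z1 + z2"
    using assms by (simp add: Gp_add gamma_p_D Gp_gamma_p)
  ultimately show "phi_p T Gp l (z1 + z2) = phi_p T Gp l z1 + phi_p T Gp l z2"
    using assms by (intro phi_p_eqI) (simp_all add: gamma_p_eq_phi_p scaleC_add_right)
next
  fix c z
  have "(c *\<^sub>C fst (gamma_p T Gp l z), c *\<^sub>C snd (gamma_p T Gp l z)) \<in> D"
    using assms by (simp add: D_scaleC gamma_p_D)
  moreover have "Gp (c *\<^sub>C fst (gamma_p T Gp l z), c *\<^sub>C snd (gamma_p T Gp l z)) = c *\<^sub>C z"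
    using assms by (simp add: Gp_scaleC gamma_p_D Gp_gamma_p)
  ultimately show "phi_p T Gp l (c *\<^sub>C z) = c *\<^sub>C phi_p T Gp l z"
    using assms by (intro phi_p_eqI) (simp_all add: gamma_p_eq_phi_p scaleC_scaleC mult.commute)
qed

lemma clinear_phi_m: assumes "cmod l < 1" shows "clinear (phi_m T Gm l)"
  unfolding clinear_def
proof safe
  fix z1 z2
  have "gamma_m T Gm l z1 + gamma_m T Gm l z2 \<in> D"
    using assms by (simp add: D_add gamma_m_D)
  moreover have "Gm (gamma_m T Gm l z1 + gamma_m T Gm l z2) = z1 + z2"
    using assms by (simp add: Gm_add gamma_m_D Gm_gamma_m)
  ultimately show "phi_m T Gm l (z1 + z2) = phi_m T Gm l z1 + phi_m T Gm l z2"
    using assms by (intro phi_m_eqI) (simp_all add: gamma_m_eq_phi_m scaleC_add_right)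
next
  fix c z
  have "(c *\<^sub>C fst (gamma_m T Gm l z), c *\<^sub>C snd (gamma_m T Gm l z)) \<in> D"
    using assms by (simp add: D_scaleC gamma_m_D)
  moreover have "Gm (c *\<^sub>C fst (gamma_m T Gm l z), c *\<^sub>C snd (gamma_m T Gm l z)) = c *\<^sub>C z"
    using assms by (simp add: Gm_scaleC gamma_m_D Gm_gamma_m)
  ultimately show "phi_m T Gm l (c *\<^sub>C z) = c *\<^sub>C phi_m T Gm l z"
    using assms by (intro phi_m_eqI) (simp_all add: gamma_m_eq_phi_m scaleC_scaleC mult.commute)
qed

lemma norm_phi_p_le:
  assumes "cmod l < 1"
  shows "(1 - (cmod l)\<^sup>2) * norm (phi_p T Gp l z) \<le> norm z"
proof (rule mult_le_if_mult_square_le)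
  define u where "u = phi_p T Gp l z"
  have b: "gamma_p T Gp l z = (u, l *\<^sub>C u)"
    by (simp add: gamma_p_eq_phi_p[OF assms] u_def)
  have "kform (u, l *\<^sub>C u) (u, l *\<^sub>C u)
      = \<i> * cinner z z - \<i> * cinner (Gm (u, l *\<^sub>C u)) (Gm (u, l *\<^sub>C u))"
    using green_identity[OF gamma_p_D gamma_p_D, OF assms assms, of z z] Gp_gamma_p[OF assms, of z]
    by (simp add: b)
  then have "\<i> * complex_of_real ((1 - (cmod l)\<^sup>2) * (norm u)\<^sup>2)
      = \<i> * complex_of_real ((norm z)\<^sup>2 - (norm (Gm (u, l *\<^sub>C u)))\<^sup>2)"
    by (simp only: kform_self_N_plus cinner_self of_real_diff right_diff_distrib)
  then have "(1 - (cmod l)\<^sup>2) * (norm u)\<^sup>2 = (norm z)\<^sup>2 - (norm (Gm (u, l *\<^sub>C u)))\<^sup>2"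
    by (simp only: mult_cancel_left of_real_eq_iff) simp
  then show "(1 - (cmod l)\<^sup>2) * (norm (phi_p T Gp l z))\<^sup>2 \<le> (norm z)\<^sup>2"
    unfolding u_def[symmetric] by simp
qed (use assms in \<open>simp_all add: abs_square_le_1 less_imp_le\<close>)

lemma norm_phi_m_le:
  assumes "cmod l < 1"
  shows "(1 - (cmod l)\<^sup>2) * norm (phi_m T Gm l z) \<le> norm z"
proof (rule mult_le_if_mult_square_le)
  define u where "u = phi_m T Gm l z"
  have b: "gamma_m T Gm l z = (l *\<^sub>C u, u)"
    by (simp add: gamma_m_eq_phi_m[OF assms] u_def)
  have "kform (l *\<^sub>C u, u) (l *\<^sub>C u, u)
      = \<i> * cinner (Gp (l *\<^sub>C u, u)) (Gp (l *\<^sub>C u, u)) - \<i> * cinner z z"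
    using green_identity[OF gamma_m_D gamma_m_D, OF assms assms, of z z] Gm_gamma_m[OF assms, of z]
    by (simp add: b)
  then have "\<i> * complex_of_real ((1 - (cmod l)\<^sup>2) * (norm u)\<^sup>2)
      = \<i> * complex_of_real ((norm z)\<^sup>2 - (norm (Gp (l *\<^sub>C u, u)))\<^sup>2)"
    by (simp only: kform_self_N_minus cinner_self of_real_diff right_diff_distrib) (simp add: algebra_simps)
  then have "(1 - (cmod l)\<^sup>2) * (norm u)\<^sup>2 = (norm z)\<^sup>2 - (norm (Gp (l *\<^sub>C u, u)))\<^sup>2"
    by (simp only: mult_cancel_left of_real_eq_iff) simp
  then show "(1 - (cmod l)\<^sup>2) * (norm (phi_m T Gm l z))\<^sup>2 \<le> (norm z)\<^sup>2"
    unfolding u_def[symmetric] by simp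
qed (use assms in \<open>simp_all add: abs_square_le_1 less_imp_le\<close>)

lemma bounded_clinear_phi_p:
  assumes "cmod l < 1" shows "bounded_clinear (phi_p T Gp l)"
proof -
  have "0 < 1 - (cmod l)\<^sup>2"
    using assms by (simp add: abs_square_less_1)
  then have "norm (phi_p T Gp l z) \<le> 1 / (1 - (cmod l)\<^sup>2) * norm z" for z
    using norm_phi_p_le[OF assms, of z] by (simp add: field_simps)
  then show ?thesis
    using clinear_phi_p[OF assms] unfolding bounded_clinear_def by blast
qed

lemma bounded_clinear_phi_m:
  assumes "cmod l < 1" shows "bounded_clinear (phi_m T Gm l)"
proof -
  have "0 < 1 - (cmod l)\<^sup>2"
    using assms by (simp add: abs_square_less_1)
  then have "norm (phi_m T Gm l z) \<le> 1 / (1 - (cmod l)\<^sup>2) * norm z" for z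
    using norm_phi_m_le[OF assms, of z] by (simp add: field_simps)
  then show ?thesis
    using clinear_phi_m[OF assms] unfolding bounded_clinear_def by blast
qed

lemma cinner_B_cadjoint:
  assumes l: "cmod l < 1"
  shows "cinner (B l x) z = cinner x (cadjoint (B l) z)"
proof -
  have l': "cmod (cnj l) < 1" using l by simp
  define a b where "a = gamma_p T Gp l x" and "b = gamma_m T Gm (cnj l) z"
  have "a \<in> Nl T True l" "b \<in> Nl T False (cnj l)"
    using gamma_p_mem[OF l] gamma_m_mem[OF l'] by (simp_all add: a_def b_def)
  then have "a \<in> D" "b \<in> D" "Gp a = x" "Gm b = z" "Gm a = B l x" "Gp b = cadjoint (B l) z"
    using Gp_gamma_p[OF l] Gm_gamma_m[OF l'] Gm_eq_B_Gp[OF l] Gp_eq_B_adjoint_Gm[OF l']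
    by (auto simp: a_def b_def mem_N_plus mem_N_minus)
  moreover have "kform a b = 0"
    unfolding a_def b_def gamma_p_eq_phi_p[OF l] gamma_m_eq_phi_m[OF l'] kform_def
    by (simp add: cinner_simps)
  ultimately have "\<i> * (cinner x (cadjoint (B l) z) - cinner (B l x) z) = 0"
    using green_identity[of a b] by (simp add: right_diff_distrib)
  then show ?thesis by simp
qed

lemma f_plus_hat:
  assumes "cmod l < 1"
  shows "f_plus T Gm (hat T x) l = cadjoint (phi_m T Gm (cnj l)) x"
proof -
  have l': "cmod (cnj l) < 1" using assms by simp
  have "phi_m T Gm (cnj l) z \<in> El T False (cnj l)" for z
    using gamma_m_mem[OF l'] by (auto simp: El_def phi_m_def)
  then have "hat T x True l (phi_m T Gm (cnj l) z) = cinner x (phi_m T Gm (cnj l) z)" for z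
    using assms by (simp add: hat_def)
  then show ?thesis
    unfolding f_plus_def using the_cinner_representer_eq_cadjoint[OF bounded_clinear_phi_m[OF l']]
    by simp
qed

lemma f_minus_hat:
  assumes "cmod l < 1"
  shows "f_minus T Gp (hat T x) l = cadjoint (phi_p T Gp (cnj l)) x"
proof -
  have l': "cmod (cnj l) < 1" using assms by simp
  have "phi_p T Gp (cnj l) z \<in> El T True (cnj l)" for z
    using gamma_p_mem[OF l'] by (auto simp: El_def phi_p_def)
  then have "hat T x False l (phi_p T Gp (cnj l) z) = cinner x (phi_p T Gp (cnj l) z)" for z
    using assms by (simp add: hat_def)
  then show ?thesis
    unfolding f_minus_def using the_cinner_representer_eq_cadjoint[OF bounded_clinear_phi_p[OF l']]
    by simp
qed

lemma cinner_f_plus_hat: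
  assumes "cmod l < 1"
  shows "cinner (l *\<^sub>C f_plus T Gm (hat T x) l - f_plus T Gm (hat T y) l) z
       = cinner (l *\<^sub>C x - y) (phi_m T Gm (cnj l) z)"
  using assms
  by (simp add: f_plus_hat cinner_simps cinner_cadjoint_left[OF bounded_clinear_phi_m])

lemma cinner_f_minus_hat:
  assumes "cmod l < 1"
  shows "cinner (f_minus T Gp (hat T x) l - l *\<^sub>C f_minus T Gp (hat T y) l) z
       = cinner (x - l *\<^sub>C y) (phi_p T Gp (cnj l) z)"
  using assms
  by (simp add: f_minus_hat cinner_simps cinner_cadjoint_left[OF bounded_clinear_phi_p])

lemma weyl_identity_plus:
  assumes "a \<in> D" and l: "cmod l < 1"
  shows "l *\<^sub>C f_plus T Gm (hat T (fst a)) l - f_plus T Gm (hat T (snd a)) l = B l (Gp a) - Gm a"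
proof (rule cinner_ext_left)
  fix z
  have l': "cmod (cnj l) < 1" using l by simp
  define u b where "u = phi_m T Gm (cnj l) z" and "b = gamma_m T Gm (cnj l) z"
  have "b \<in> D" "b = (cnj l *\<^sub>C u, u)" "Gm b = z" "Gp b = cadjoint (B l) z"
    using gamma_m_D[OF l'] gamma_m_eq_phi_m[OF l'] Gm_gamma_m[OF l']
      Gp_eq_B_adjoint_Gm[OF l' gamma_m_mem[OF l']]
    by (simp_all add: u_def b_def)
  then have "\<i> * cinner (l *\<^sub>C fst a - snd a) u = \<i> * cinner (B l (Gp a) - Gm a) z"
    using green_identity[OF \<open>a \<in> D\<close>, of b] cinner_B_cadjoint[OF l, of "Gp a" z]
    by (simp add: kform_def cinner_simps right_diff_distrib)
  then show "cinner (l *\<^sub>C f_plus T Gm (hat T (fst a)) l - f_plus T Gm (hat T (snd a)) l) z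
      = cinner (B l (Gp a) - Gm a) z"
    by (simp add: cinner_f_plus_hat[OF l] u_def)
qed

lemma weyl_identity_minus:
  assumes "a \<in> D" and l: "cmod l < 1"
  shows "f_minus T Gp (hat T (fst a)) l - l *\<^sub>C f_minus T Gp (hat T (snd a)) l
       = Gp a - cadjoint (B (cnj l)) (Gm a)"
proof (rule cinner_ext_left)
  fix z
  have l': "cmod (cnj l) < 1" using l by simp
  define v b where "v = phi_p T Gp (cnj l) z" and "b = gamma_p T Gp (cnj l) z"
  have "b \<in> D" "b = (v, cnj l *\<^sub>C v)" "Gp b = z" "Gm b = B (cnj l) z"
    using gamma_p_D[OF l'] gamma_p_eq_phi_p[OF l'] Gp_gamma_p[OF l']
      Gm_eq_B_Gp[OF l' gamma_p_mem[OF l']]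
    by (simp_all add: v_def b_def)
  moreover have "cinner (Gm a) (B (cnj l) z) = cinner (cadjoint (B (cnj l)) (Gm a)) z"
    using cinner_B_cadjoint[OF l', of z "Gm a"] by (metis cinner_commute)
  ultimately have "\<i> * cinner (fst a - l *\<^sub>C snd a) v = \<i> * cinner (Gp a - cadjoint (B (cnj l)) (Gm a)) z"
    using green_identity[OF \<open>a \<in> D\<close>, of b]
    by (simp add: kform_def cinner_simps right_diff_distrib)
  then show "cinner (f_minus T Gp (hat T (fst a)) l - l *\<^sub>C f_minus T Gp (hat T (snd a)) l) z
      = cinner (Gp a - cadjoint (B (cnj l)) (Gm a)) z"
    by (simp add: cinner_f_minus_hat[OF l] v_def)
qed

lemma orthogonal_ran_T_minus_I_in_range_phi_m:
  assumes c: "cmod c < 1" and orth: "\<And>w. w \<in> ran_T_minus_I c \<Longrightarrow> cinner u w = 0"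
  shows "phi_m T Gm (cnj c) (Gm (cnj c *\<^sub>C u, u)) = u"
proof (rule phi_m_eqI)
  have "cinner u (T k - c *\<^sub>C k) = 0" if "k \<in> K" for k
    using that by (intro orth) (auto simp: mem_ran_T_minus_I)
  then show "(cnj c *\<^sub>C u, u) \<in> D"
    by (simp add: mem_D cinner_simps)
qed (use c in simp_all)

lemma orthogonal_ran_I_minus_T_in_range_phi_p:
  assumes c: "cmod c < 1" and orth: "\<And>w. w \<in> ran_I_minus_T c \<Longrightarrow> cinner u w = 0"
  shows "phi_p T Gp (cnj c) (Gp (u, cnj c *\<^sub>C u)) = u"
proof (rule phi_p_eqI)
  have "cinner u (k - c *\<^sub>C T k) = 0" if "k \<in> K" for k
    using that by (intro orth) (auto simp: mem_ran_I_minus_T)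
  then show "(u, cnj c *\<^sub>C u) \<in> D"
    by (simp add: mem_D cinner_simps)
qed (use c in simp_all)

lemma mem_ran_T_minus_I_if_orthogonal_range_phi_m:
  assumes c: "cmod c < 1" and orth: "\<And>z. cinner v (phi_m T Gm (cnj c) z) = 0"
  shows "v \<in> ran_T_minus_I c"
  using closed_csubspace_orthogonal_orthogonal[OF closed_csubspace_ran_T_minus_I[OF c]]
    orth orthogonal_ran_T_minus_I_in_range_phi_m[OF c] by metis

lemma mem_ran_I_minus_T_if_orthogonal_range_phi_p:
  assumes c: "cmod c < 1" and orth: "\<And>z. cinner v (phi_p T Gp (cnj c) z) = 0"
  shows "v \<in> ran_I_minus_T c"
  using closed_csubspace_orthogonal_orthogonal[OF closed_csubspace_ran_I_minus_T[OF c]]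
    orth orthogonal_ran_I_minus_T_in_range_phi_p[OF c] by metis

lemma weyl_identities_if_mem_D:
  "(x, y) \<in> D \<Longrightarrow> weyl_identities T Gp Gm B (hat T x) (hat T y) (Gp (x, y)) (Gm (x, y))"
  using weyl_identity_plus[of "(x, y)"] weyl_identity_minus[of "(x, y)"]
  by (simp add: weyl_identities_def)

lemma mem_ran_T_minus_I_if_weyl_identity_plus:
  assumes "a \<in> D" and c: "cmod c < 1"
    and "c *\<^sub>C f_plus T Gm (hat T x) c - f_plus T Gm (hat T y) c = B c (Gp a) - Gm a"
  shows "c *\<^sub>C (x - fst a) - (y - snd a) \<in> ran_T_minus_I c"
proof (rule mem_ran_T_minus_I_if_orthogonal_range_phi_m[OF c])
  fix z
  let ?u = "phi_m T Gm (cnj c) z"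
  have "cinner (c *\<^sub>C x - y) ?u = cinner (B c (Gp a) - Gm a) z"
    using assms(3) by (simp flip: cinner_f_plus_hat[OF c])
  also have "\<dots> = cinner (c *\<^sub>C fst a - snd a) ?u"
    using weyl_identity_plus[OF assms(1) c] by (simp flip: cinner_f_plus_hat[OF c])
  finally show "cinner (c *\<^sub>C (x - fst a) - (y - snd a)) ?u = 0"
    by (simp add: cinner_simps scaleC_diff_right algebra_simps)
qed

lemma mem_ran_I_minus_T_if_weyl_identity_minus:
  assumes "a \<in> D" and c: "cmod c < 1"
    and "f_minus T Gp (hat T x) c - c *\<^sub>C f_minus T Gp (hat T y) c
      = Gp a - cadjoint (B (cnj c)) (Gm a)"
  shows "(x - fst a) - c *\<^sub>C (y - snd a) \<in> ran_I_minus_T c"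
proof (rule mem_ran_I_minus_T_if_orthogonal_range_phi_p[OF c])
  fix z
  let ?v = "phi_p T Gp (cnj c) z"
  have "cinner (x - c *\<^sub>C y) ?v = cinner (Gp a - cadjoint (B (cnj c)) (Gm a)) z"
    using assms(3) by (simp flip: cinner_f_minus_hat[OF c])
  also have "\<dots> = cinner (fst a - c *\<^sub>C snd a) ?v"
    using weyl_identity_minus[OF assms(1) c] by (simp flip: cinner_f_minus_hat[OF c])
  finally show "cinner ((x - fst a) - c *\<^sub>C (y - snd a)) ?v = 0"
    by (simp add: cinner_simps scaleC_diff_right algebra_simps)
qed

lemma mem_D_if_weyl_identities:
  assumes cnu: "completely_non_unitary T"
    and weyl: "weyl_identities T Gp Gm B (hat T x) (hat T y) xp xm"
  shows "(x, y) \<in> D"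
proof -
  obtain a where "a \<in> D" and a: "Gp a = xp" "Gm a = xm"
    using Gamma_surj by blast
  define p q where "p = x - fst a" and "q = y - snd a"
  have "(p, q) \<in> A_T T"
  proof (rule mem_A_T_if_in_ranges[OF cnu])
    show "p - c *\<^sub>C q \<in> ran_I_minus_T c" if "cmod c < 1" for c
      using weyl that mem_ran_I_minus_T_if_weyl_identity_minus[OF \<open>a \<in> D\<close> that]
      by (simp add: weyl_identities_def a p_def q_def)
    show "c *\<^sub>C p - q \<in> ran_T_minus_I c" if "cmod c < 1" for c
      using weyl that mem_ran_T_minus_I_if_weyl_identity_plus[OF \<open>a \<in> D\<close> that]
      by (simp add: weyl_identities_def a p_def q_def)
  qed
  then have "a + (p, q) \<in> D"
    using \<open>a \<in> D\<close> A_T_subset_D D_add by blast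
  then show ?thesis
    by (cases a) (simp add: p_def q_def)
qed

end

theorem proposition4p15:
  fixes T :: "'a::{complex_inner,banach} \<Rightarrow> 'a"
    and Gp :: "'a \<times> 'a \<Rightarrow> 'p::{complex_inner,banach}"
    and Gm :: "'a \<times> 'a \<Rightarrow> 'm::{complex_inner,banach}"
    and B :: "complex \<Rightarrow> 'p \<Rightarrow> 'm"
    and s t :: "bool \<Rightarrow> complex \<Rightarrow> 'a \<Rightarrow> complex"
  assumes "separable_H TYPE('a)"
    and "infinite_dimensional TYPE('a)"
    and "bounded_clinear T"
    and "\<forall>x. norm (T x) \<le> norm x"
    and "completely_non_unitary T"
    and "boundary_quadruple T Gp Gm"
    and "contractive_weyl_function T Gp Gm B"
    and "s \<in> frakH T" and "t \<in> frakH T"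
  shows "(s, t) \<in> hat_rel T (s_orth (A_T T)) \<longleftrightarrow>
    (\<exists>xp xm.
       (\<forall>l. norm l < 1 \<longrightarrow> l *\<^sub>C f_plus T Gm s l - f_plus T Gm t l = B l xp - xm)
     \<and> (\<forall>l. norm l < 1 \<longrightarrow> f_minus T Gp s l - l *\<^sub>C f_minus T Gp t l = xp - cadjoint (B (cnj l)) xm))"
proof -
  interpret contractive_weyl T Gp Gm B
    using assms(3,4,6,7) by unfold_locales auto
  show ?thesis
    unfolding weyl_identities_def[symmetric]
  proof
    assume "(s, t) \<in> hat_rel T D"
    then obtain x y where "(x, y) \<in> D" "s = hat T x" "t = hat T y"
      by (auto simp: hat_rel_def)
    then show "\<exists>xp xm. weyl_identities T Gp Gm B s t xp xm"
      using weyl_identities_if_mem_D by blast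
  next
    assume "\<exists>xp xm. weyl_identities T Gp Gm B s t xp xm"
    moreover obtain x y where "s = hat T x" "t = hat T y"
      using assms(8,9) by (auto simp: frakH_def)
    ultimately have "(x, y) \<in> D"
      using mem_D_if_weyl_identities[OF assms(5)] by blast
    then show "(s, t) \<in> hat_rel T D"
      using \<open>s = hat T x\<close> \<open>t = hat T y\<close> by (auto simp: hat_rel_def)
  qed
qed

end
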